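(* Let $P=\operatorname{conv}(v_0,\ldots,v_d)\subseteq M_{\mathbb{R}}$ be a lattice $d$-simplex that is not unimodularly equivalent to the standard simplex $\Delta_d=\operatorname{conv}(0,e_1,\ldots,e_d)$. Then $\deg(P)\ge\nu_P$.
   Context: $M\cong\mathbb{Z}^d$ is a lattice. Two lattice polytopes are unimodularly equivalent if one is mapped to the other by an affine lattice automorphism of $M$. For a lattice $d$-polytope $P$, the Ehrhart series is $\sum_{k\ge0}|kP\cap M|t^k=h^*_P(t)/(1-t)^{d+1}$ with $h^*_P$ a polynomial of degree at most $d$; $\deg(P)$ is defined as the degree of $h^*_P$ (equivalently, $\deg(P)=d$ if $P$ has an interior lattice point, and otherwise $\deg(P)$ is the smallest $i\ge 0$ such that $kP$ has no interior lattice points for all $1\le k\le d-i$). With $\mathcal{V}$ the vertex set of $P$, $\nu_P$ is the smallest positive integer such that $(k+1)P\cap M=\mathcal{V}+(kP\cap M)$ for all $k\ge\nu_P$. *)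

theory Defs
  imports "HOL-Analysis.Analysis" "HOL-Computational_Algebra.Formal_Power_Series"
begin

text \<open>The lattice M is the integer lattice in real^'n; d = CARD('n).\<close>

definition is_lattice_point :: "real^'n \<Rightarrow> bool" where
  "is_lattice_point x \<longleftrightarrow> (\<forall>i. x $ i \<in> \<int>)"

definition lattice_pts :: "(real^'n) set \<Rightarrow> (real^'n) set" where
  "lattice_pts S = {x \<in> S. is_lattice_point x}"

definition dilate :: "real \<Rightarrow> (real^'n) set \<Rightarrow> (real^'n) set" where
  "dilate k S = (\<lambda>x. k *\<^sub>R x) ` S"

definition ehrhart_series :: "(real^'n) set \<Rightarrow> int fps" where
  "ehrhart_series P = Abs_fps (\<lambda>k. int (card (lattice_pts (dilate (real k) P))))"

definition hstar :: "(real^'n) set \<Rightarrow> int fps" where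
  "hstar P = (1 - fps_X) ^ (CARD('n) + 1) * ehrhart_series P"

definition lattice_degree :: "(real^'n) set \<Rightarrow> nat" where
  "lattice_degree P = Max {i. fps_nth (hstar P) i \<noteq> 0}"

definition nu :: "(real^'n) set \<Rightarrow> nat" where
  "nu P = (LEAST n::nat. 0 < n \<and> (\<forall>k\<ge>n.
      lattice_pts (dilate (real (k + 1)) P) =
      {v + x | v x. v extreme_point_of P \<and> x \<in> lattice_pts (dilate (real k) P)}))"

definition unimod_equiv :: "(real^'n) set \<Rightarrow> (real^'n) set \<Rightarrow> bool" where
  "unimod_equiv P Q \<longleftrightarrow> (\<exists>(A::real^'n^'n) b. (\<forall>i j. A $ i $ j \<in> \<int>) \<and> is_lattice_point b \<and>
      \<bar>det A\<bar> = 1 \<and> (\<lambda>x. A *v x + b) ` P = Q)"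

definition std_simplex :: "(real^'n) set" where
  "std_simplex = convex hull (insert 0 (range (\<lambda>i. axis i 1)))"

end

theory Submission
  imports Defs
begin

text \<open>
  Write the lattice points of \<open>kP\<close> in barycentric coordinates with respect to the vertex set
  \<open>V\<close>. The fractional parts of the coordinates form a box point (a lattice point of the
  half-open fundamental parallelepiped of the cone over \<open>P\<close>, of some integral height \<open>h\<close>)
  and the integer parts a weak composition of \<open>k - h\<close> indexed by \<open>V\<close>; this decomposition is
  unique. Hence \<open>h\<^sup>*\<^sub>P(t)\<close> is the sum of \<open>t\<^sup>h\<close> over all box points, and \<open>deg P\<close> is the maximal
  height of a box point. Once \<open>k \<ge> deg P\<close>, the integer part of a lattice point of \<open>(k+1)P\<close> is
  nonzero, so a vertex splits off and \<open>\<nu>\<^sub>P \<le> deg P\<close>, provided \<open>deg P > 0\<close>. If \<open>deg P = 0\<close>,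
  the only box point is \<open>0\<close>, all lattice points have integral barycentric coordinates, the edge
  vectors at a vertex form a lattice basis, and \<open>P\<close> is unimodularly equivalent to \<open>\<Delta>\<^sub>d\<close>.
\<close>

lemma lattice_point_add:
  "is_lattice_point x \<Longrightarrow> is_lattice_point y \<Longrightarrow> is_lattice_point (x + y)"
  by (auto simp: is_lattice_point_def)

lemma lattice_point_diff:
  "is_lattice_point x \<Longrightarrow> is_lattice_point y \<Longrightarrow> is_lattice_point (x - y)"
  by (auto simp: is_lattice_point_def)

lemma lattice_point_sum_scaleR:
  "(\<And>a. a \<in> A \<Longrightarrow> c a \<in> \<int> \<and> is_lattice_point (f a)) \<Longrightarrow>
    is_lattice_point (\<Sum>a\<in>A. c a *\<^sub>R f a)"
  by (auto simp: is_lattice_point_def intro!: Ints_sum Ints_mult)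

lemma lattice_point_axis: "is_lattice_point (axis j (1::real))"
  by (simp add: is_lattice_point_def axis_def)

lemma lattice_point_matrix_vector_mult:
  fixes A :: "real^'n^'m"
  shows "(\<forall>i j. A$i$j \<in> \<int>) \<Longrightarrow> is_lattice_point x \<Longrightarrow> is_lattice_point (A *v x)"
  unfolding is_lattice_point_def matrix_vector_mult_def by (auto intro!: Ints_sum Ints_mult)

lemma det_in_Ints:
  fixes A :: "real^'n^'n"
  shows "(\<forall>i j. A$i$j \<in> \<int>) \<Longrightarrow> det A \<in> \<int>"
  unfolding det_def by (auto intro!: Ints_sum Ints_mult Ints_prod)

lemma abs_eq_1_if_Ints_mult_eq_1:
  fixes a b :: real
  assumes "a \<in> \<int>" "b \<in> \<int>" "a * b = 1"
  shows "\<bar>b\<bar> = 1"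
proof -
  obtain m n where "a = of_int m" "b = of_int n" using assms(1,2) by (auto elim!: Ints_cases)
  then have "m * n = 1" using assms(3) by (metis of_int_eq_1_iff of_int_mult)
  then show ?thesis using \<open>b = of_int n\<close> zmult_eq_1_iff by auto
qed

lemma finite_lattice_pts_bounded:
  fixes S :: "(real^'n) set"
  assumes "bounded S"
  shows "finite (lattice_pts S)"
proof -
  obtain B where B: "\<And>x. x \<in> S \<Longrightarrow> norm x \<le> B" using assms bounded_iff by blast
  let ?f = "\<lambda>x::real^'n. (\<lambda>i. \<lfloor>x $ i\<rfloor>)"
  have "inj_on ?f (lattice_pts S)"
  proof (rule inj_onI)
    fix x y assume "x \<in> lattice_pts S" "y \<in> lattice_pts S" "?f x = ?f y"
    moreover have "z $ i = of_int \<lfloor>z $ i\<rfloor>" if "z \<in> lattice_pts S" for z i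
      using that frac_eq_0_iff[of "z $ i"] by (simp add: lattice_pts_def is_lattice_point_def frac_def)
    ultimately show "x = y" by (metis vec_eq_iff)
  qed
  moreover have "?f ` lattice_pts S \<subseteq> (\<Pi>\<^sub>E i\<in>UNIV. {-\<lceil>B\<rceil>..\<lceil>B\<rceil>})"
  proof
    fix z assume "z \<in> ?f ` lattice_pts S"
    then obtain x where x: "x \<in> lattice_pts S" and z: "z = ?f x" by blast
    have "\<lfloor>x $ i\<rfloor> \<in> {-\<lceil>B\<rceil>..\<lceil>B\<rceil>}" for i
    proof -
      have "\<bar>x $ i\<bar> \<le> B"
        using B x component_le_norm_cart order_trans unfolding lattice_pts_def by blast
      then have "-B \<le> x $ i" "x $ i \<le> B" by auto
      then show ?thesis
        using le_of_int_ceiling[of B] floor_le_ceiling[of "x $ i"] ceiling_mono[of "x $ i" B]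
        unfolding atLeastAtMost_iff le_floor_iff by linarith
    qed
    then show "z \<in> (\<Pi>\<^sub>E i\<in>UNIV. {-\<lceil>B\<rceil>..\<lceil>B\<rceil>})" using z by auto
  qed
  moreover have "finite (\<Pi>\<^sub>E i\<in>(UNIV::'n set). {-\<lceil>B\<rceil>..\<lceil>B\<rceil>})" by (intro finite_PiE) auto
  ultimately show ?thesis using finite_imageD finite_subset by blast
qed

lemma integral_left_inverse_matrix:
  fixes M :: "real^'n^'n"
  assumes M_int: "\<forall>i j. M$i$j \<in> \<int>"
    and lattice_preimage: "\<And>y. is_lattice_point y \<Longrightarrow> \<exists>z. is_lattice_point z \<and> M *v z = y"
  obtains B where "B ** M = mat 1" "\<forall>i j. B$i$j \<in> \<int>" "\<bar>det B\<bar> = 1"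
proof -
  define z where "z j = (SOME z. is_lattice_point z \<and> M *v z = axis j 1)" for j
  have z: "is_lattice_point (z j)" "M *v z j = axis j 1" for j
    using someI_ex[OF lattice_preimage[OF lattice_point_axis]] by (auto simp: z_def)
  define B :: "real^'n^'n" where "B = (\<chi> i j. z j $ i)"
  have "(M ** B) *v x = mat 1 *v x" for x
  proof -
    have "B *v x = (\<Sum>j\<in>UNIV. x $ j *\<^sub>R z j)"
      by (simp add: B_def matrix_vector_mult_def vec_eq_iff sum_component mult.commute)
    then have "M *v (B *v x) = (\<Sum>j\<in>UNIV. x $ j *\<^sub>R axis j 1)"
      by (simp add: linear_sum[OF matrix_vector_mul_linear] matrix_vector_mult_scaleR z(2))
    then show ?thesis using basis_expansion[of x] by (simp add: matrix_vector_mul_assoc scalar_mult_eq_scaleR)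
  qed
  then have MB: "M ** B = mat 1" using matrix_eq by blast
  have B_int: "\<forall>i j. B$i$j \<in> \<int>" using z(1) by (simp add: B_def is_lattice_point_def)
  have "det M * det B = 1" using det_mul[of M B] MB by simp
  then have "\<bar>det B\<bar> = 1" using abs_eq_1_if_Ints_mult_eq_1 det_in_Ints M_int B_int by blast
  moreover have "B ** M = mat 1" using MB matrix_left_right_inverse by blast
  ultimately show thesis using B_int that by blast
qed

lemma image_affine_convex_hull:
  fixes B :: "real^'n^'m"
  shows "(\<lambda>x. B *v x + b) ` (convex hull S) = convex hull ((\<lambda>x. B *v x + b) ` S)"
proof -
  have "(\<lambda>x. B *v x + b) ` T = (\<lambda>x. b + x) ` ((\<lambda>x. B *v x) ` T)" for T :: "(real^'n) set"
    by (simp add: image_image add.commute)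
  then show ?thesis by (simp add: convex_hull_linear_image convex_hull_translation)
qed


definition weak_compositions :: "'a set \<Rightarrow> nat \<Rightarrow> ('a \<Rightarrow> nat) set" where
  "weak_compositions S n = {m \<in> S \<rightarrow>\<^sub>E UNIV. sum m S = n}"

lemma finite_weak_compositions:
  assumes "finite S" shows "finite (weak_compositions S n)"
proof -
  have "weak_compositions S n \<subseteq> S \<rightarrow>\<^sub>E {0..n}"
    using member_le_sum[OF _ _ assms] by (fastforce simp: weak_compositions_def)
  moreover have "finite (S \<rightarrow>\<^sub>E {0..n})" using assms by (intro finite_PiE) auto
  ultimately show ?thesis using finite_subset by blast
qed

lemma card_weak_compositions_empty: "card (weak_compositions {} n) = (if n = 0 then 1 else 0)"
  by (simp add: weak_compositions_def PiE_empty_domain)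

lemma card_weak_compositions_insert:
  assumes S: "finite S" and a: "a \<notin> S"
  shows "card (weak_compositions (insert a S) n) = (\<Sum>i\<le>n. card (weak_compositions S i))"
proof -
  let ?B = "SIGMA i:{..n}. weak_compositions S i"
  have sum_insert: "\<And>m. sum m (insert a S) = m a + sum m S" using S a by simp
  have restrict_upd: "sum (m(a := j)) S = sum m S" for m j using a by (intro sum.cong) auto
  let ?g = "\<lambda>(i, m). m(a := n - i)"
  have "bij_betw (\<lambda>m. (sum m S, restrict m S)) (weak_compositions (insert a S) n) ?B"
  proof (rule bij_betwI[where g = ?g])
    show "(\<lambda>m. (sum m S, restrict m S)) \<in> weak_compositions (insert a S) n \<rightarrow> ?B"
      by (auto simp: weak_compositions_def sum_insert)
    show "?g \<in> ?B \<rightarrow> weak_compositions (insert a S) n"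
    proof
      fix y assume "y \<in> ?B"
      then obtain i m where "y = (i, m)" "i \<le> n" "m \<in> weak_compositions S i" by blast
      then show "?g y \<in> weak_compositions (insert a S) n"
        using restrict_upd[of m "n - i"] sum_insert[of "m(a := n - i)"] a
        by (auto simp: weak_compositions_def PiE_def extensional_def)
    qed
    show "?g (sum m S, restrict m S) = m" if "m \<in> weak_compositions (insert a S) n" for m
      using that sum_insert[of m] a
      by (auto simp: weak_compositions_def PiE_def extensional_def fun_eq_iff)
    show "(sum (?g y) S, restrict (?g y) S) = y" if "y \<in> ?B" for y
    proof -
      obtain i m where "y = (i, m)" "m \<in> weak_compositions S i" using \<open>y \<in> ?B\<close> by blast
      then show ?thesis
        using restrict_upd[of m "n - i"] a
        by (auto simp: weak_compositions_def PiE_def extensional_def fun_eq_iff)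
    qed
  qed
  then have "card (weak_compositions (insert a S) n) = card ?B" by (rule bij_betw_same_card)
  also have "\<dots> = (\<Sum>i\<le>n. card (weak_compositions S i))"
    by (rule card_SigmaI) (auto intro: finite_weak_compositions[OF S])
  finally show ?thesis .
qed

definition weak_composition_series :: "'a set \<Rightarrow> int fps" where
  "weak_composition_series S = Abs_fps (\<lambda>n. int (card (weak_compositions S n)))"

lemma one_minus_X_power_card_mult_weak_composition_series:
  "finite S \<Longrightarrow> (1 - fps_X) ^ card S * weak_composition_series S = 1"
proof (induction S rule: finite_induct)
  case empty
  show ?case by (simp add: fps_eq_iff weak_composition_series_def card_weak_compositions_empty)
next
  case (insert a S)
  have geometric: "(1 - fps_X) * Abs_fps (\<lambda>_. 1::int) = 1"
    by (simp add: fps_eq_iff algebra_simps fps_X_mult_nth)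
  have "weak_composition_series (insert a S) = weak_composition_series S * Abs_fps (\<lambda>_. 1)"
    by (simp add: fps_eq_iff weak_composition_series_def fps_mult_nth atLeast0AtMost
        card_weak_compositions_insert[OF insert(1,2)])
  then have "(1 - fps_X) ^ card (insert a S) * weak_composition_series (insert a S)
      = ((1 - fps_X) ^ card S * weak_composition_series S) * ((1 - fps_X) * Abs_fps (\<lambda>_. 1))"
    using insert by (simp add: mult_ac)
  then show ?case using insert geometric by simp
qed


subsection \<open>Barycentric coordinates and box points of a lattice simplex\<close>

locale lattice_simplex =
  fixes V :: "(real^'n) set"
  assumes finite_V: "finite V" and V_nonempty: "V \<noteq> {}"
    and affine_independent_V: "\<not> affine_dependent V"
    and lattice_V: "\<forall>v\<in>V. is_lattice_point v"
begin

definition comb :: "(real^'n \<Rightarrow> real) \<Rightarrow> real^'n" where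
  "comb l = (\<Sum>v\<in>V. l v *\<^sub>R v)"

definition cone_level :: "real \<Rightarrow> (real^'n) set" where
  "cone_level k = {comb l | l. (\<forall>v\<in>V. 0 \<le> l v) \<and> sum l V = k}"

text \<open>Barycentric coordinates of the lattice points of the half-open parallelepiped spanned by
  the vectors \<open>(v, 1)\<close>, \<open>v \<in> V\<close>; the last coordinate of such a point is its height.\<close>
definition box_points :: "(real^'n \<Rightarrow> real) set" where
  "box_points = {l \<in> V \<rightarrow>\<^sub>E {0..<1}. sum l V \<in> \<int> \<and> is_lattice_point (comb l)}"

definition height :: "(real^'n \<Rightarrow> real) \<Rightarrow> nat" where
  "height l = nat \<lfloor>sum l V\<rfloor>"

definition max_height :: nat where
  "max_height = Max (height ` box_points)"

lemma comb_add: "comb (\<lambda>v. a v + b v) = comb a + comb b"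
  by (simp add: comb_def scaleR_add_left sum.distrib)

lemma comb_delta:
  assumes "v \<in> V"
  shows "comb (\<lambda>w. if w = v then 1 else 0) = v"
proof -
  have "comb (\<lambda>w. if w = v then 1 else 0) = (\<Sum>w\<in>V. if w = v then w else 0)"
    unfolding comb_def by (intro sum.cong) auto
  then show ?thesis using assms finite_V by simp
qed

lemma lattice_point_comb: "(\<And>v. v \<in> V \<Longrightarrow> l v \<in> \<int>) \<Longrightarrow> is_lattice_point (comb l)"
  unfolding comb_def using lattice_V by (intro lattice_point_sum_scaleR) auto

lemma barycentric_coordinates_unique:
  assumes "sum l V = sum l' V" "comb l = comb l'" "v \<in> V"
  shows "l v = l' v"
proof (rule ccontr)
  assume "l v \<noteq> l' v"
  have "sum (\<lambda>w. l w - l' w) V = 0" using assms by (simp add: sum_subtractf)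
  moreover have "(\<Sum>w\<in>V. (l w - l' w) *\<^sub>R w) = 0"
    using assms by (simp add: comb_def scaleR_diff_left sum_subtractf)
  ultimately have "affine_dependent V"
    unfolding affine_dependent_explicit_finite[OF finite_V]
    using \<open>l v \<noteq> l' v\<close> assms(3) by (intro exI[of _ "\<lambda>w. l w - l' w"]) auto
  then show False using affine_independent_V by simp
qed

lemma cone_level_zero: "cone_level 0 = {0}"
proof -
  have "comb l = 0" if "\<forall>v\<in>V. 0 \<le> l v" "sum l V = 0" for l
  proof -
    have "\<forall>v\<in>V. l v = 0" using that sum_nonneg_eq_0_iff[OF finite_V] by blast
    then show ?thesis by (simp add: comb_def)
  qed
  moreover have "comb (\<lambda>_. 0) = 0" by (simp add: comb_def)
  ultimately show ?thesis unfolding cone_level_def by force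
qed

lemma dilate_convex_hull_eq_cone_level:
  assumes "k \<ge> 0"
  shows "dilate k (convex hull V) = cone_level k"
proof (cases "k = 0")
  case True
  then show ?thesis using V_nonempty by (simp add: cone_level_zero dilate_def image_constant_conv)
next
  case False
  then have k: "k > 0" using assms by simp
  have "x \<in> cone_level k" if "x \<in> dilate k (convex hull V)" for x
  proof -
    obtain u where u: "\<forall>v\<in>V. 0 \<le> u v" "sum u V = 1" "x = k *\<^sub>R comb u"
      using \<open>x \<in> dilate k (convex hull V)\<close>
      by (auto simp: dilate_def convex_hull_finite[OF finite_V] comb_def)
    have "x = comb (\<lambda>v. k * u v)" using u(3) by (simp add: comb_def scaleR_sum_right)
    moreover have "sum (\<lambda>v. k * u v) V = k" using u(2) by (simp add: sum_distrib_left[symmetric])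
    ultimately show ?thesis using u(1) k unfolding cone_level_def by fastforce
  qed
  moreover have "x \<in> dilate k (convex hull V)" if "x \<in> cone_level k" for x
  proof -
    obtain l where l: "\<forall>v\<in>V. 0 \<le> l v" "sum l V = k" "x = comb l"
      using \<open>x \<in> cone_level k\<close> by (auto simp: cone_level_def)
    have "comb (\<lambda>v. l v / k) \<in> convex hull V"
      unfolding convex_hull_finite[OF finite_V] comb_def
      using l k by (auto simp: sum_divide_distrib[symmetric] intro!: exI[of _ "\<lambda>v. l v / k"])
    moreover have "x = k *\<^sub>R comb (\<lambda>v. l v / k)"
      using l k by (simp add: comb_def scaleR_sum_right)
    ultimately show ?thesis by (auto simp: dilate_def)
  qed
  ultimately show ?thesis by blast
qed

lemma lattice_pts_cone_levelI:
  "\<forall>v\<in>V. 0 \<le> l v \<Longrightarrow> sum l V = k \<Longrightarrow> is_lattice_point (comb l) \<Longrightarrow>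
    comb l \<in> lattice_pts (cone_level k)"
  by (auto simp: lattice_pts_def cone_level_def)

lemma lattice_pts_cone_levelE:
  assumes "x \<in> lattice_pts (cone_level k)"
  obtains l where "\<forall>v\<in>V. 0 \<le> l v" "sum l V = k" "x = comb l" "is_lattice_point x"
  using assms by (auto simp: lattice_pts_def cone_level_def)

lemma real_height: "l \<in> box_points \<Longrightarrow> real (height l) = sum l V"
proof -
  assume l: "l \<in> box_points"
  then have "sum l V \<ge> 0" by (auto simp: box_points_def PiE_def intro!: sum_nonneg)
  moreover obtain z where "sum l V = of_int z" using l by (auto simp: box_points_def elim!: Ints_cases)
  ultimately show ?thesis by (simp add: height_def)
qed

lemma height_le_card: "l \<in> box_points \<Longrightarrow> height l \<le> card V"
proof -
  assume l: "l \<in> box_points"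
  have "sum l V \<le> sum (\<lambda>_. 1) V"
    using l by (intro sum_mono) (auto simp: box_points_def PiE_def Pi_def less_imp_le)
  then show ?thesis using real_height[OF l] by simp
qed

lemma finite_box_points: "finite box_points"
proof -
  define R where "R = (\<Sum>v\<in>V. norm v)"
  have "inj_on (\<lambda>l. (comb l, height l)) box_points"
  proof (rule inj_onI)
    fix l l' assume l: "l \<in> box_points" and l': "l' \<in> box_points"
      and eq: "(comb l, height l) = (comb l', height l')"
    then have "sum l V = sum l' V" using real_height by (metis prod.inject)
    then have "\<And>v. v \<in> V \<Longrightarrow> l v = l' v" using eq barycentric_coordinates_unique by auto
    then show "l = l'" using l l' by (auto simp: box_points_def intro: PiE_ext)
  qed
  moreover have "(\<lambda>l. (comb l, height l)) ` box_points \<subseteq> lattice_pts (cball 0 R) \<times> {..card V}"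
  proof
    fix z assume "z \<in> (\<lambda>l. (comb l, height l)) ` box_points"
    then obtain l where l: "l \<in> box_points" and z: "z = (comb l, height l)" by blast
    have "norm (comb l) \<le> (\<Sum>v\<in>V. norm (l v *\<^sub>R v))" unfolding comb_def by (rule norm_sum)
    also have "\<dots> \<le> R" unfolding R_def
    proof (rule sum_mono)
      fix v assume "v \<in> V"
      then have "\<bar>l v\<bar> \<le> 1" using l by (auto simp: box_points_def PiE_def Pi_def)
      then show "norm (l v *\<^sub>R v) \<le> norm v" by (simp add: mult_left_le_one_le)
    qed
    finally show "z \<in> lattice_pts (cball 0 R) \<times> {..card V}"
      using l z height_le_card by (auto simp: lattice_pts_def box_points_def)
  qed
  moreover have "finite (lattice_pts (cball 0 R) \<times> {..card V})"
    by (intro finite_cartesian_product finite_lattice_pts_bounded) auto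
  ultimately show ?thesis using finite_imageD finite_subset by blast
qed

lemma height_le_max_height: "l \<in> box_points \<Longrightarrow> height l \<le> max_height"
  unfolding max_height_def using finite_box_points by (intro Max_ge) auto

lemma fractional_part_in_box_points:
  assumes "sum c V \<in> \<int>" and "is_lattice_point (comb c)"
  shows "restrict (\<lambda>v. frac (c v)) V \<in> box_points"
proof -
  let ?l = "restrict (\<lambda>v. frac (c v)) V" and ?f = "\<lambda>v. of_int \<lfloor>c v\<rfloor> :: real"
  have c_eq: "\<forall>v\<in>V. c v = ?l v + ?f v" by (simp add: frac_def)
  have "comb ?l = comb c - comb ?f"
    unfolding comb_def sum_subtractf[symmetric] by (intro sum.cong) (auto simp: frac_def scaleR_diff_left)
  then have "is_lattice_point (comb ?l)"
    using lattice_point_diff[OF assms(2) lattice_point_comb[of ?f]] by simp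
  moreover have "sum c V = sum (\<lambda>v. ?l v + ?f v) V"
    using c_eq by (intro sum.cong) auto
  then have "sum c V = sum ?l V + sum ?f V" by (simp add: sum.distrib)
  then have "sum ?l V \<in> \<int>" using assms(1) by (metis Ints_diff Ints_of_int Ints_sum add_diff_cancel_right')
  ultimately show ?thesis by (simp add: box_points_def frac_lt_1)
qed

definition box_decompositions :: "nat \<Rightarrow> ((real^'n \<Rightarrow> real) \<times> (real^'n \<Rightarrow> nat)) set" where
  "box_decompositions k =
    (SIGMA l:{l \<in> box_points. height l \<le> k}. weak_compositions V (k - height l))"

lemma box_decomposition_exists:
  assumes c: "\<forall>v\<in>V. 0 \<le> c v" "sum c V = real k" "is_lattice_point (comb c)"
  obtains l m where "(l, m) \<in> box_decompositions k" "\<forall>v\<in>V. c v = l v + real (m v)"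
proof -
  define l where "l = restrict (\<lambda>v. frac (c v)) V"
  define m where "m = restrict (\<lambda>v. nat \<lfloor>c v\<rfloor>) V"
  have c_eq: "\<forall>v\<in>V. c v = l v + real (m v)" using c(1) by (auto simp: l_def m_def frac_def)
  have l: "l \<in> box_points" unfolding l_def using c by (intro fractional_part_in_box_points) auto
  have "real k = sum l V + real (sum m V)"
    using c(2) c_eq by (simp add: sum.distrib[symmetric] cong: sum.cong)
  then have "height l + sum m V = k" using real_height[OF l] by linarith
  then have "(l, m) \<in> box_decompositions k"
    using l by (auto simp: box_decompositions_def weak_compositions_def m_def)
  then show thesis using c_eq that by blast
qed

lemma sum_box_decomposition:
  "(l, m) \<in> box_decompositions k \<Longrightarrow> sum (\<lambda>v. l v + real (m v)) V = real k"
  using real_height[of l]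
  by (auto simp: box_decompositions_def weak_compositions_def sum.distrib simp flip: of_nat_sum)

lemma box_decomposition_unique:
  assumes A: "(l, m) \<in> box_decompositions k" and B: "(l', m') \<in> box_decompositions k"
    and eq: "comb (\<lambda>v. l v + real (m v)) = comb (\<lambda>v. l' v + real (m' v))"
  shows "l = l' \<and> m = m'"
proof -
  have l01: "l \<in> V \<rightarrow>\<^sub>E {0..<1}" "l' \<in> V \<rightarrow>\<^sub>E {0..<1}"
    using A B by (auto simp: box_decompositions_def box_points_def)
  have "l v + real (m v) = l' v + real (m' v)" if "v \<in> V" for v
    using barycentric_coordinates_unique[OF _ eq that] sum_box_decomposition[OF A]
      sum_box_decomposition[OF B] by simp
  moreover have "\<lfloor>l v + real (m v)\<rfloor> = m v" "\<lfloor>l' v + real (m' v)\<rfloor> = m' v" if "v \<in> V" for v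
    using l01 that by (auto intro!: floor_unique simp: PiE_def Pi_def)
  ultimately have "\<forall>v\<in>V. m v = m' v \<and> l v = l' v" by (metis of_int_of_nat_eq of_nat_eq_iff add_right_cancel)
  moreover have "m \<in> V \<rightarrow>\<^sub>E UNIV" "m' \<in> V \<rightarrow>\<^sub>E UNIV"
    using A B by (auto simp: box_decompositions_def weak_compositions_def)
  ultimately show ?thesis using l01 by (auto intro: PiE_ext)
qed

lemma lattice_pts_cone_level_eq_image:
  "lattice_pts (cone_level (real k)) =
    (\<lambda>(l, m). comb (\<lambda>v. l v + real (m v))) ` box_decompositions k"
proof
  show "lattice_pts (cone_level (real k)) \<subseteq> (\<lambda>(l, m). comb (\<lambda>v. l v + real (m v))) ` box_decompositions k"
  proof
    fix x assume "x \<in> lattice_pts (cone_level (real k))"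
    then obtain c where c: "\<forall>v\<in>V. 0 \<le> c v" "sum c V = real k" "x = comb c" "is_lattice_point x"
      by (rule lattice_pts_cone_levelE)
    obtain l m where "(l, m) \<in> box_decompositions k" "\<forall>v\<in>V. c v = l v + real (m v)"
      using box_decomposition_exists[OF c(1,2)] c(3,4) by blast
    moreover from this(2) have "x = comb (\<lambda>v. l v + real (m v))"
      unfolding c(3) comb_def by (intro sum.cong) auto
    ultimately show "x \<in> (\<lambda>(l, m). comb (\<lambda>v. l v + real (m v))) ` box_decompositions k" by force
  qed
  show "(\<lambda>(l, m). comb (\<lambda>v. l v + real (m v))) ` box_decompositions k \<subseteq> lattice_pts (cone_level (real k))"
  proof clarify
    fix l m assume lm: "(l, m) \<in> box_decompositions k"
    then have l: "l \<in> box_points" by (simp add: box_decompositions_def)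
    show "comb (\<lambda>v. l v + real (m v)) \<in> lattice_pts (cone_level (real k))"
    proof (rule lattice_pts_cone_levelI)
      show "\<forall>v\<in>V. 0 \<le> l v + real (m v)" using l by (auto simp: box_points_def PiE_def Pi_def)
      show "sum (\<lambda>v. l v + real (m v)) V = real k" using lm by (rule sum_box_decomposition)
      show "is_lattice_point (comb (\<lambda>v. l v + real (m v)))"
        using l unfolding comb_add box_points_def
        by (auto intro!: lattice_point_add lattice_point_comb)
    qed
  qed
qed

lemma card_lattice_pts_dilate:
  "card (lattice_pts (dilate (real k) (convex hull V))) =
    (\<Sum>l\<in>{l \<in> box_points. height l \<le> k}. card (weak_compositions V (k - height l)))"
proof -
  have "inj_on (\<lambda>(l, m). comb (\<lambda>v. l v + real (m v))) (box_decompositions k)"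
    using box_decomposition_unique by (auto intro!: inj_onI)
  then have "card (lattice_pts (cone_level (real k))) = card (box_decompositions k)"
    unfolding lattice_pts_cone_level_eq_image by (rule card_image)
  also have "\<dots> = (\<Sum>l\<in>{l \<in> box_points. height l \<le> k}. card (weak_compositions V (k - height l)))"
    unfolding box_decompositions_def
    using finite_box_points finite_weak_compositions[OF finite_V] by (intro card_SigmaI) auto
  finally show ?thesis by (simp add: dilate_convex_hull_eq_cone_level)
qed


subsection \<open>The \<open>h\<^sup>*\<close>-polynomial and the degree\<close>

lemma ehrhart_series_eq:
  "ehrhart_series (convex hull V) = (\<Sum>l\<in>box_points. fps_X ^ height l) * weak_composition_series V"
proof (rule fps_ext)
  fix k
  have "fps_nth ((\<Sum>l\<in>box_points. fps_X ^ height l) * weak_composition_series V) k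
      = (\<Sum>l\<in>box_points. if height l \<le> k then int (card (weak_compositions V (k - height l))) else 0)"
    by (auto simp: sum_distrib_right fps_sum_nth fps_X_power_mult_nth weak_composition_series_def
        intro!: sum.cong)
  also have "\<dots> = int (card (lattice_pts (dilate (real k) (convex hull V))))"
    unfolding card_lattice_pts_dilate using finite_box_points
    by (auto simp: sum.inter_filter intro!: sum.cong)
  finally show "fps_nth (ehrhart_series (convex hull V)) k
      = fps_nth ((\<Sum>l\<in>box_points. fps_X ^ height l) * weak_composition_series V) k"
    by (simp add: ehrhart_series_def)
qed

lemma hstar_eq:
  assumes "card V = CARD('n) + 1"
  shows "hstar (convex hull V) = (\<Sum>l\<in>box_points. fps_X ^ height l)"
  using one_minus_X_power_card_mult_weak_composition_series[OF finite_V]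
  unfolding hstar_def ehrhart_series_eq assms[symmetric] by (simp add: mult_ac)

lemma lattice_degree_eq_max_height:
  assumes "card V = CARD('n) + 1"
  shows "lattice_degree (convex hull V) = max_height"
proof -
  have "fps_nth (hstar (convex hull V)) i = int (card {l \<in> box_points. height l = i})" for i
    unfolding hstar_eq[OF assms] fps_sum_nth using finite_box_points
    by (simp add: sum.If_cases eq_commute, intro arg_cong[where f=card], blast)
  then have "{i. fps_nth (hstar (convex hull V)) i \<noteq> 0} = height ` box_points"
    using finite_box_points by auto
  then show ?thesis by (simp add: lattice_degree_def max_height_def)
qed


subsection \<open>Generation in degree one above the maximal height\<close>

lemma vertex_plus_lattice_pts_cone_level:
  assumes v: "v \<in> V" and x: "x \<in> lattice_pts (cone_level (real k))"
  shows "v + x \<in> lattice_pts (cone_level (real (k + 1)))"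
proof -
  obtain c where c: "\<forall>w\<in>V. 0 \<le> c w" "sum c V = real k" "x = comb c" "is_lattice_point x"
    using x by (rule lattice_pts_cone_levelE)
  let ?c = "\<lambda>w. c w + (if w = v then 1 else 0)"
  have comb_eq: "comb ?c = v + x" unfolding comb_add using comb_delta[OF v] c(3) by simp
  have "comb ?c \<in> lattice_pts (cone_level (real (k + 1)))"
  proof (rule lattice_pts_cone_levelI)
    show "\<forall>w\<in>V. 0 \<le> ?c w" using c(1) by simp
    show "sum ?c V = real (k + 1)" using finite_V v c(2) by (simp add: sum.distrib)
    show "is_lattice_point (comb ?c)"
      unfolding comb_eq using v c(4) lattice_V lattice_point_add by blast
  qed
  then show ?thesis by (simp only: comb_eq)
qed

lemma split_off_vertex:
  assumes k: "max_height \<le> k" and x: "x \<in> lattice_pts (cone_level (real (k + 1)))"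
  obtains v where "v \<in> V" "x - v \<in> lattice_pts (cone_level (real k))"
proof -
  obtain c where c: "\<forall>w\<in>V. 0 \<le> c w" "sum c V = real (k + 1)" "x = comb c" "is_lattice_point x"
    using x by (rule lattice_pts_cone_levelE)
  obtain l m where lm: "(l, m) \<in> box_decompositions (k + 1)" "\<forall>w\<in>V. c w = l w + real (m w)"
    using box_decomposition_exists[OF c(1,2)] c(3,4) by blast
  then have l: "l \<in> box_points" and m: "m \<in> weak_compositions V (k + 1 - height l)"
    by (simp_all add: box_decompositions_def)
  have "height l \<le> k" using height_le_max_height[OF l] k by simp
  then have "sum m V \<noteq> 0" using m by (simp add: weak_compositions_def)
  then obtain v where v: "v \<in> V" "m v \<noteq> 0" by (rule sum.not_neutral_contains_not_neutral)
  have "l v \<ge> 0" using l v(1) by (auto simp: box_points_def PiE_def Pi_def)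
  moreover have "c v = l v + real (m v)" using lm(2) v(1) by blast
  ultimately have cv: "c v \<ge> 1" using v(2) by linarith
  let ?c = "\<lambda>w. c w - (if w = v then 1 else 0)"
  have comb_eq: "comb ?c = x - v"
    using comb_add[of ?c "\<lambda>w. if w = v then 1 else 0"] comb_delta[OF v(1)] c(3) by simp
  have "comb ?c \<in> lattice_pts (cone_level (real k))"
  proof (rule lattice_pts_cone_levelI)
    show "\<forall>w\<in>V. 0 \<le> ?c w" using c(1) cv by simp
    show "sum ?c V = real k" using finite_V v(1) c(2) by (simp add: sum_subtractf)
    show "is_lattice_point (comb ?c)"
      unfolding comb_eq using lattice_point_diff c(4) lattice_V v(1) by blast
  qed
  then show thesis using that v(1) by (simp only: comb_eq)
qed

lemma lattice_pts_cone_level_Suc: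
  assumes "max_height \<le> k"
  shows "lattice_pts (cone_level (real (k + 1))) =
    {v + x | v x. v \<in> V \<and> x \<in> lattice_pts (cone_level (real k))}"
  using split_off_vertex[OF assms] vertex_plus_lattice_pts_cone_level
  by (auto simp: add.commute) (metis diff_add_cancel add.commute)

lemma nu_le_max_height:
  assumes "0 < max_height"
  shows "nu (convex hull V) \<le> max_height"
  unfolding nu_def
proof (rule Least_le, intro conjI allI impI)
  fix k assume "max_height \<le> k"
  then have "lattice_pts (cone_level (real (k + 1))) =
      {v + x | v x. v \<in> V \<and> x \<in> lattice_pts (cone_level (real k))}"
    by (rule lattice_pts_cone_level_Suc)
  moreover have "v extreme_point_of (convex hull V) \<longleftrightarrow> v \<in> V" for v
    using extreme_point_of_convex_hull_affine_independent[OF affine_independent_V] by blast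
  ultimately show "lattice_pts (dilate (real (k + 1)) (convex hull V)) =
      {v + x | v x. v extreme_point_of (convex hull V) \<and> x \<in> lattice_pts (dilate (real k) (convex hull V))}"
    by (simp add: dilate_convex_hull_eq_cone_level)
qed (use assms in simp)


subsection \<open>Simplices without nonzero box points are unimodular\<close>

lemma affine_hull_eq_UNIV:
  assumes "card V = CARD('n) + 1"
  shows "affine hull V = UNIV"
proof -
  have "of_nat (card V) = aff_dim V + 1" using aff_dim_affine_independent[OF affine_independent_V] .
  then have "aff_dim V = int (DIM(real^'n))" using assms by simp
  then show ?thesis using aff_dim_eq_full by blast
qed

lemma lattice_point_integral_barycentric:
  assumes card: "card V = CARD('n) + 1" and max_height: "max_height = 0"
    and y: "is_lattice_point y"
  obtains \<mu> where "sum \<mu> V = 1" "comb \<mu> = y" "\<forall>v\<in>V. \<mu> v \<in> \<int>"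
proof -
  obtain \<mu> where \<mu>: "sum \<mu> V = 1" "comb \<mu> = y"
    using affine_hull_eq_UNIV[OF card] unfolding affine_hull_finite[OF finite_V] comb_def by blast
  let ?l = "restrict (\<lambda>v. frac (\<mu> v)) V"
  have l: "?l \<in> box_points" using \<mu> y by (intro fractional_part_in_box_points) auto
  then have "sum ?l V = 0" using real_height height_le_max_height max_height by fastforce
  then have "\<forall>v\<in>V. frac (\<mu> v) = 0"
    using sum_nonneg_eq_0_iff[OF finite_V, of ?l] by (simp add: frac_ge_0)
  then show thesis using \<mu> that by (simp add: frac_eq_0_iff)
qed

lemma unimod_equiv_std_simplex:
  assumes card: "card V = CARD('n) + 1" and max_height: "max_height = 0"
  shows "unimod_equiv (convex hull V) std_simplex"
proof -
  obtain v0 where v0: "v0 \<in> V" using V_nonempty by blast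
  have "card (V - {v0}) = CARD('n)" using card v0 finite_V by simp
  then obtain e where e: "bij_betw e (UNIV::'n set) (V - {v0})"
    using finite_same_card_bij[of "UNIV::'n set" "V - {v0}"] finite_V by auto
  then have V_eq: "V = insert v0 (range e)" using v0 by (auto simp: bij_betw_def)
  define M :: "real^'n^'n" where "M = (\<chi> r c. (e c - v0) $ r)"
  have M_axis: "M *v axis c 1 = e c - v0" for c
    by (simp add: M_def matrix_vector_mult_basis column_def vec_eq_iff)
  have M_int: "\<forall>i j. M$i$j \<in> \<int>"
    using lattice_V V_eq v0 by (auto simp: M_def is_lattice_point_def)
  have comb_minus_v0: "comb \<mu> - v0 = M *v (\<chi> c. \<mu> (e c))" if "sum \<mu> V = 1" for \<mu>
  proof -
    have "comb \<mu> - v0 = (\<Sum>v\<in>V. \<mu> v *\<^sub>R (v - v0))"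
      using that by (simp add: comb_def scaleR_diff_right sum_subtractf flip: scaleR_sum_left)
    also have "\<dots> = (\<Sum>v\<in>V - {v0}. \<mu> v *\<^sub>R (v - v0))"
      using sum.remove[OF finite_V v0, of "\<lambda>v. \<mu> v *\<^sub>R (v - v0)"] by simp
    also have "\<dots> = (\<Sum>c\<in>UNIV. \<mu> (e c) *\<^sub>R (e c - v0))"
      using sum.reindex_bij_betw[OF e, of "\<lambda>v. \<mu> v *\<^sub>R (v - v0)"] by simp
    finally show ?thesis
      by (simp add: matrix_mult_sum M_def column_def scalar_mult_eq_scaleR vec_eq_iff)
  qed
  have "\<exists>z. is_lattice_point z \<and> M *v z = y" if y: "is_lattice_point y" for y
  proof -
    have "is_lattice_point (y + v0)" using lattice_point_add[OF y] lattice_V v0 by blast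
    then obtain \<mu> where \<mu>: "sum \<mu> V = 1" "comb \<mu> = y + v0" "\<forall>v\<in>V. \<mu> v \<in> \<int>"
      by (rule lattice_point_integral_barycentric[OF card max_height])
    have "is_lattice_point (\<chi> c. \<mu> (e c))" using \<mu>(3) V_eq by (simp add: is_lattice_point_def)
    then show ?thesis using comb_minus_v0[OF \<mu>(1)] \<mu>(2) by (intro exI[of _ "\<chi> c. \<mu> (e c)"]) simp
  qed
  then obtain B where BM: "B ** M = mat 1" and B_int: "\<forall>i j. B$i$j \<in> \<int>" and det_B: "\<bar>det B\<bar> = 1"
    using integral_left_inverse_matrix[OF M_int] by blast
  define b where "b = - (B *v v0)"
  have b: "is_lattice_point b"
    using lattice_point_matrix_vector_mult[OF B_int, of v0] lattice_V v0
    by (auto simp: b_def is_lattice_point_def)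
  have "B *v e c + b = axis c 1" for c
  proof -
    have "B *v e c + b = B *v (M *v axis c 1)" by (simp add: b_def M_axis matrix_vector_mult_diff_distrib)
    also have "\<dots> = axis c 1" by (simp add: matrix_vector_mul_assoc BM)
    finally show ?thesis .
  qed
  moreover have "B *v v0 + b = 0" by (simp add: b_def)
  ultimately have "(\<lambda>x. B *v x + b) ` V = insert 0 (range (\<lambda>c. axis c 1))"
    unfolding V_eq image_insert image_image by simp
  then have "(\<lambda>x. B *v x + b) ` (convex hull V) = std_simplex"
    by (simp add: image_affine_convex_hull std_simplex_def)
  then show ?thesis
    unfolding unimod_equiv_def using B_int b det_B by (intro exI[of _ B] exI[of _ b]) simp
qed

end


theorem mainTheorem3:
  fixes V :: "(real^'n) set"
  assumes "card V = CARD('n) + 1"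
    and "\<forall>v\<in>V. is_lattice_point v"
    and "\<not> affine_dependent V"
    and "\<not> unimod_equiv (convex hull V) std_simplex"
  shows "nu (convex hull V) \<le> lattice_degree (convex hull V)"
proof -
  have "finite V" using assms(1) by (intro card_ge_0_finite) simp
  moreover have "V \<noteq> {}" using assms(1) by auto
  ultimately interpret lattice_simplex V using assms(2,3) by unfold_locales
  have "max_height \<noteq> 0" using unimod_equiv_std_simplex[OF assms(1)] assms(4) by blast
  then show ?thesis
    using nu_le_max_height lattice_degree_eq_max_height[OF assms(1)] by simp
qed

end
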